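(* Let $a$ be the unique positive real number with $\frac{1-\ln a}{a}=\frac1e$ (so $a\approx1.54$), and let $\psi_a(x)=1-(1-x)a^x$ for $x\in[0,1]$. Then $\psi_a$ is a convex, strictly increasing, three times differentiable bijection of $[0,1]$ onto $[0,1]$ with $\psi_a'>0$ on $[0,1]$, and it satisfies: (1) $x\psi_a'(x)/\psi_a(x)$ is strictly increasing on $(0,1]$; (2) $x\psi_a''(x)/\psi_a'(x)$ is strictly increasing on $(0,1]$; (3) $\psi_a(e^{-r/e})+\psi_a(re^{-r/e})\ge1$ for all $0\le r\le1$. *)

theory Defs
  imports "HOL-Analysis.Analysis"
begin

definition a_const :: real where
  "a_const = (THE a. a > 0 \<and> (1 - ln a) / a = 1 / exp 1)"

definition psi_a :: "real \<Rightarrow> real" where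
  "psi_a x = 1 - (1 - x) * a_const powr x"

end

theory Submission imports Defs begin

(* Writing L = ln a, the defining equation (1 - ln a)/a = 1/e becomes exp L = e (1 - L),
   whose left side minus right side is strictly increasing in L; a sign change on
   [0.4, 1] gives existence, uniqueness and the bounds 0.4 < L < 1.  In terms of L,
     psi(x) = 1 - (1 - x) e^(Lx),   psi'(x) = e^(Lx) (1 - L + Lx),
     psi''(x) = L e^(Lx) (2 - L + Lx),   psi'''(x) = L^2 e^(Lx) (3 - L + Lx),
   so psi', psi'' > 0 on [0, 1], giving convexity, strict monotonicity and, with
   psi(0) = 0 and psi(1) = 1, bijectivity.  Property (2) reduces to a polynomial
   identity.  Property (1) follows from (2) by a general lemma: if f(0) = 0, f' > 0
   and the elasticity x f''/f' increases, then so does x f'/f.  For (3) the sum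
   G(r) = psi(e^(-r/e)) + psi(r e^(-r/e)) equals 1 at r = 0, and its derivative is
   nonnegative by two elementary bounds on psi'. *)

lemma elasticity_strict_mono_from_derivative:
  fixes f f' f'' :: "real \<Rightarrow> real" and b :: real
  assumes df: "\<And>x. x \<in> {0..b} \<Longrightarrow> (f has_real_derivative f' x) (at x)"
    and df': "\<And>x. x \<in> {0..b} \<Longrightarrow> (f' has_real_derivative f'' x) (at x)"
    and f0: "f 0 = 0"
    and f'_pos: "\<And>x. x \<in> {0..b} \<Longrightarrow> f' x > 0"
    and mono: "strict_mono_on {0<..b} (\<lambda>x. x * f'' x / f' x)"
  shows "strict_mono_on {0<..b} (\<lambda>x. x * f' x / f x)"
proof -
  have f_pos: "f z > 0" if "0 < z" "z \<le> b" for z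
  proof -
    have "f 0 < f z"
    proof (rule DERIV_pos_imp_increasing[OF that(1)])
      fix t assume "0 \<le> t" "t \<le> z"
      thus "\<exists>y. DERIV f t :> y \<and> y > 0" using df[of t] f'_pos[of t] that by auto
    qed
    thus ?thesis using f0 by simp
  qed
  text \<open>The numerator of the derivative of x f'(x)/f(x) is positive: comparing with
    the auxiliary function K, which vanishes at 0 and increases on [0, z].\<close>
  have numerator_pos: "(f' z + z * f'' z) * f z - z * f' z * f' z > 0"
    if z: "0 < z" "z \<le> b" for z
  proof -
    define K where "K w = (f' z + z * f'' z) * f w - f' z * (w * f' w)" for w
    have dK: "(K has_real_derivative (z * f'' z * f' w - w * f'' w * f' z)) (at w)"
      if "w \<in> {0..z}" for w
    proof -
      have w: "w \<in> {0..b}" using that z by auto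
      have "((\<lambda>x. x * f' x) has_real_derivative 1 * f' w + f'' w * w) (at w)"
        by (rule DERIV_mult[OF DERIV_ident df'[OF w]])
      hence "(K has_real_derivative
          (f' z + z * f'' z) * f' w - f' z * (1 * f' w + f'' w * w)) (at w)"
        unfolding K_def[abs_def] by (intro DERIV_diff DERIV_cmult df[OF w])
      thus ?thesis by (simp add: algebra_simps)
    qed
    have "K 0 < K z"
    proof (rule DERIV_pos_imp_increasing_open[OF z(1)])
      fix w assume w: "0 < w" "w < z"
      have "w * f'' w / f' w < z * f'' z / f' z"
        using w z by (intro strict_mono_onD[OF mono]) auto
      hence "w * f'' w * f' z < z * f'' z * f' w"
        using w z f'_pos[of w] f'_pos[of z] by (simp add: divide_simps)
      thus "\<exists>y. DERIV K w :> y \<and> y > 0" using dK[of w] w by auto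
    next
      show "continuous_on {0..z} K" using dK by (rule has_real_derivative_imp_continuous_on)
    qed
    thus ?thesis by (simp add: K_def f0 algebra_simps)
  qed
  show ?thesis
  proof (rule strict_mono_onI)
    fix x y assume xy: "x \<in> {0<..b}" "y \<in> {0<..b}" "x < y"
    show "x * f' x / f x < y * f' y / f y"
    proof (rule DERIV_pos_imp_increasing[OF xy(3)])
      fix z assume "x \<le> z" "z \<le> y"
      hence z: "0 < z" "z \<le> b" using xy by auto
      have "DERIV (\<lambda>x. x * f' x / f x) z :>
          ((f' z + z * f'' z) * f z - z * f' z * f' z) / (f z * f z)"
        using DERIV_divide[OF DERIV_mult[OF DERIV_ident df'] df, of z] f_pos[OF z] z
        by (simp add: algebra_simps)
      thus "\<exists>d. DERIV (\<lambda>x. x * f' x / f x) z :> d \<and> d > 0"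
        using numerator_pos[OF z] f_pos[OF z] by auto
    qed
  qed
qed

lemma strict_mono_continuous_bij_betw:
  fixes f :: "real \<Rightarrow> real"
  assumes mono: "strict_mono_on {a..b} f" and cont: "continuous_on {a..b} f" and "a \<le> b"
  shows "bij_betw f {a..b} {f a..f b}"
proof -
  have "f ` {a..b} \<subseteq> {f a..f b}"
    using mono \<open>a \<le> b\<close> by (auto simp: strict_mono_on_leD)
  moreover have "{f a..f b} \<subseteq> f ` {a..b}"
  proof
    fix y assume "y \<in> {f a..f b}"
    then obtain x where "a \<le> x" "x \<le> b" "f x = y"
      using IVT'[of f a y b] cont \<open>a \<le> b\<close> by auto
    thus "y \<in> f ` {a..b}" by force
  qed
  ultimately show ?thesis
    using strict_mono_on_imp_inj_on[OF mono] by (auto simp: bij_betw_def)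
qed

section \<open>The constant a\<close>

text \<open>Numerical bounds on e: the first locates the root L above 0.4, the second
  bounds 1/e in Property (3).\<close>

lemma exp_04_lt: "exp (0.4::real) < 0.6 * exp 1"
proof -
  have "1.3 \<le> exp (0.3::real)" using exp_ge_add_one_self[of "0.3::real"] by simp
  hence "1.3 * 1.3 \<le> exp (0.3::real) * exp 0.3" by (intro mult_mono) auto
  hence "1 < 0.6 * exp (0.6::real)" by (simp add: mult_exp_exp)
  hence "exp 0.4 < 0.6 * exp 0.6 * exp (0.4::real)" by simp
  also have "\<dots> = 0.6 * exp 1" by (simp add: mult_exp_exp)
  finally show ?thesis .
qed

lemma exp_1_gt: "exp 1 > (2.7::real)"
  using e_approx_32 by (simp add: abs_if split: if_split_asm)

text \<open>The equation for L = ln a is h(L) = 0 for the strictly increasing function h.\<close>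

definition log_equation :: "real \<Rightarrow> real" where
  "log_equation L = exp L - exp 1 * (1 - L)"

lemma log_equation_strict_mono: "strict_mono log_equation"
proof (rule strict_monoI)
  fix x y :: real assume "x < y"
  hence "exp x < exp y" "exp 1 * x < exp 1 * y" by auto
  thus "log_equation x < log_equation y"
    unfolding log_equation_def right_diff_distrib by linarith
qed

lemma defining_equation_iff:
  assumes "a > 0" shows "(1 - ln a) / a = 1 / exp 1 \<longleftrightarrow> log_equation (ln a) = 0"
  using assms by (auto simp: log_equation_def field_simps)

lemma a_unique: "\<exists>!a::real. a > 0 \<and> (1 - ln a) / a = 1 / exp 1"
proof -
  have "log_equation 0.4 \<le> 0" "0 \<le> log_equation 1"
    using exp_04_lt by (auto simp: log_equation_def)
  moreover have "continuous_on {0.4..1} log_equation"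
    unfolding log_equation_def by (intro continuous_intros)
  ultimately obtain L where L: "log_equation L = 0"
    using IVT'[of log_equation "0.4" 0 1] by auto
  show ?thesis
  proof (rule ex1I[of _ "exp L"])
    show "exp L > 0 \<and> (1 - ln (exp L)) / exp L = 1 / exp 1"
      using L defining_equation_iff[of "exp L"] by simp
  next
    fix a :: real assume "a > 0 \<and> (1 - ln a) / a = 1 / exp 1"
    hence "a > 0" "log_equation (ln a) = log_equation L"
      using L defining_equation_iff[of a] by auto
    thus "a = exp L"
      using strict_mono_eq[OF log_equation_strict_mono] by fastforce
  qed
qed

definition ln_a :: real where "ln_a = ln a_const"

lemma ln_a_equation: "log_equation ln_a = 0" and a_const_eq: "a_const = exp ln_a"
proof -
  have "a_const > 0 \<and> (1 - ln a_const) / a_const = 1 / exp 1"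
    unfolding a_const_def by (rule theI'[OF a_unique])
  thus "log_equation ln_a = 0" "a_const = exp ln_a"
    using defining_equation_iff[of a_const] by (auto simp: ln_a_def)
qed

lemma exp_ln_a: "exp ln_a = exp 1 * (1 - ln_a)"
  using ln_a_equation by (simp add: log_equation_def)

lemma ln_a_bounds: "0.4 < ln_a" "ln_a < 1"
proof -
  have "log_equation 0.4 < log_equation ln_a" "log_equation ln_a < log_equation 1"
    using ln_a_equation exp_04_lt by (auto simp: log_equation_def)
  thus "0.4 < ln_a" "ln_a < 1"
    using strict_mono_less[OF log_equation_strict_mono] by auto
qed

section \<open>Derivatives of psi\<close>

definition dpsi :: "real \<Rightarrow> real" where
  "dpsi x = exp (ln_a * x) * (1 - ln_a + ln_a * x)"

definition ddpsi :: "real \<Rightarrow> real" where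
  "ddpsi x = ln_a * exp (ln_a * x) * (2 - ln_a + ln_a * x)"

lemma psi_a_exp: "psi_a = (\<lambda>x. 1 - (1 - x) * exp (ln_a * x))"
  by (auto simp: psi_a_def a_const_eq powr_def mult.commute)

lemma psi_a_0: "psi_a 0 = 0" and psi_a_1: "psi_a 1 = 1"
  by (simp_all add: psi_a_exp)

lemma psi_a_has_derivative: "(psi_a has_real_derivative dpsi x) (at x)"
  unfolding psi_a_exp dpsi_def
  by (rule derivative_eq_intros refl | simp)+ (simp add: algebra_simps)

lemma dpsi_has_derivative: "(dpsi has_real_derivative ddpsi x) (at x)"
  unfolding dpsi_def[abs_def] ddpsi_def
  by (rule derivative_eq_intros refl | simp)+ (simp add: algebra_simps)

lemma ddpsi_has_derivative:
  "(ddpsi has_real_derivative ln_a^2 * exp (ln_a * x) * (3 - ln_a + ln_a * x)) (at x)"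
  unfolding ddpsi_def[abs_def]
  by (rule derivative_eq_intros refl | simp)+ (simp add: algebra_simps power2_eq_square)

lemma deriv_psi_a: "deriv psi_a = dpsi" and deriv_dpsi: "deriv dpsi = ddpsi"
  using psi_a_has_derivative dpsi_has_derivative DERIV_imp_deriv by blast+

lemma dpsi_pos: "x \<ge> 0 \<Longrightarrow> dpsi x > 0" and ddpsi_pos: "x \<ge> 0 \<Longrightarrow> ddpsi x > 0"
  using ln_a_bounds by (auto simp: dpsi_def ddpsi_def intro!: mult_pos_pos add_pos_nonneg)

lemma psi_a_strict_mono: "strict_mono_on {0..1} psi_a"
  by (rule strict_mono_onI, rule DERIV_pos_imp_increasing)
     (use psi_a_has_derivative dpsi_pos in fastforce)+

lemma psi_a_convex: "convex_on {0..1} psi_a"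
  by (rule f''_ge0_imp_convex[where f'=dpsi and f''=ddpsi])
     (auto intro: psi_a_has_derivative dpsi_has_derivative less_imp_le[OF ddpsi_pos])

lemma psi_a_bij: "bij_betw psi_a {0..1} {0..1}"
proof -
  have "continuous_on {0..1} psi_a"
    using psi_a_has_derivative by (rule has_real_derivative_imp_continuous_on)
  from strict_mono_continuous_bij_betw[OF psi_a_strict_mono this] show ?thesis
    by (simp add: psi_a_0 psi_a_1)
qed

section \<open>Property (2): the elasticity of psi'\<close>

text \<open>Cross-multiplied form of the strict increase of x psi''(x)/psi'(x): with c = 1 - L,
  the difference is e^(L(w+z)) L (z - w) (c (1 + c) + L c (z + w) + L^2 z w).\<close>

lemma dpsi_elasticity_cross:
  assumes "0 \<le> w" "w < z" shows "w * ddpsi w * dpsi z < z * ddpsi z * dpsi w"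
proof -
  define c where "c = 1 - ln_a"
  have c: "c > 0" and L: "ln_a > 0" using ln_a_bounds by (auto simp: c_def)
  have "z * ddpsi z * dpsi w - w * ddpsi w * dpsi z
     = ln_a * exp (ln_a * w) * exp (ln_a * z)
       * ((z - w) * (c * (1 + c) + ln_a * c * (z + w) + ln_a^2 * z * w))"
    unfolding dpsi_def ddpsi_def c_def by (simp add: algebra_simps power2_eq_square)
  moreover have "c * (1 + c) + ln_a * c * (z + w) + ln_a^2 * z * w > 0"
    using c L assms by (intro add_pos_nonneg) auto
  ultimately have "z * ddpsi z * dpsi w - w * ddpsi w * dpsi z > 0"
    using L assms by simp
  thus ?thesis by simp
qed

lemma dpsi_elasticity_strict_mono: "strict_mono_on {0<..1} (\<lambda>x. x * ddpsi x / dpsi x)"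
proof (rule strict_mono_onI)
  fix x y :: real assume xy: "x \<in> {0<..1}" "y \<in> {0<..1}" "x < y"
  hence "x * ddpsi x * dpsi y < y * ddpsi y * dpsi x" by (intro dpsi_elasticity_cross) auto
  thus "x * ddpsi x / dpsi x < y * ddpsi y / dpsi y"
    using dpsi_pos[of x] dpsi_pos[of y] xy by (simp add: divide_simps mult_ac)
qed

section \<open>Property (3)\<close>

text \<open>psi' is increasing, so on [0, 1] it is at most psi'(1) = a = e (1 - L).\<close>

lemma dpsi_le_on_unit:
  assumes "0 \<le> s" "s \<le> 1" shows "dpsi s \<le> exp 1 * (1 - ln_a)"
proof -
  have "exp (ln_a * s) \<le> exp ln_a" "1 - ln_a + ln_a * s \<le> 1" "0 \<le> 1 - ln_a + ln_a * s"
    using ln_a_bounds assms by (auto simp: mult_left_le_one_le)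
  hence "dpsi s \<le> exp ln_a * 1" unfolding dpsi_def by (intro mult_mono) auto
  thus ?thesis using exp_ln_a by simp
qed

text \<open>Tangent-line lower bound from e^u \<ge> 1 + u.\<close>

lemma dpsi_ge_linear:
  assumes "0 \<le> y" shows "dpsi y \<ge> 1 - ln_a + ln_a * (2 - ln_a) * y"
proof -
  have nonneg: "0 \<le> 1 - ln_a + ln_a * y" using ln_a_bounds assms by simp
  have "dpsi y \<ge> (1 + ln_a * y) * (1 - ln_a + ln_a * y)"
    unfolding dpsi_def using exp_ge_add_one_self[of "ln_a * y"] nonneg
    by (intro mult_right_mono) auto
  also have "(1 + ln_a * y) * (1 - ln_a + ln_a * y)
           = 1 - ln_a + ln_a * (2 - ln_a) * y + (ln_a * y)^2"
    by (simp add: algebra_simps power2_eq_square)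
  finally show ?thesis using zero_le_power2[of "ln_a * y"] by linarith
qed

text \<open>With c = 1/e and s = e^(-tc) \<ge> 1 - tc, the factor (1 - tc) psi'(ts) stays above
  1 - L; numerically, L (2 - L) \<ge> 0.64 and (1 - tc)^2 \<ge> (17/27)^2 beat c (1 - L).\<close>

lemma dpsi_shifted_lower_bound:
  assumes t: "0 \<le> t" "t \<le> 1" and c: "0 < c" "c < 10/27" and s: "s \<ge> 1 - t * c"
  shows "(1 - t * c) * dpsi (t * s) \<ge> 1 - ln_a"
proof -
  have L: "0.4 < ln_a" "ln_a < 1" by (rule ln_a_bounds)+
  have tc: "t * c \<le> c" using t c by (simp add: mult_left_le_one_le)
  hence q1: "1 - t * c \<ge> 17/27" using c by linarith
  have ts: "t * s \<ge> t * (1 - t * c)" using s t by (simp add: mult_left_mono)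
  have "t * (1 - t * c) \<ge> 0" using t q1 by simp
  hence "dpsi (t * s) \<ge> 1 - ln_a + ln_a * (2 - ln_a) * (t * s)"
    using ts by (intro dpsi_ge_linear) linarith
  moreover have "ln_a * (2 - ln_a) * (t * s) \<ge> ln_a * (2 - ln_a) * (t * (1 - t * c))"
    using L by (intro mult_left_mono[OF ts]) auto
  ultimately have dpsi_ts: "dpsi (t * s) \<ge> 1 - ln_a + ln_a * (2 - ln_a) * (t * (1 - t * c))"
    by linarith
  have "ln_a * (2 - ln_a) - 0.64 = (ln_a - 0.4) * (1.6 - ln_a)"
    by (simp add: algebra_simps field_simps)
  moreover have "(ln_a - 0.4) * (1.6 - ln_a) > 0" using L by simp
  ultimately have L2: "ln_a * (2 - ln_a) \<ge> 0.64" by linarith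
  have q2: "(1 - t * c) * (1 - t * c) \<ge> (17/27) * (17/27)"
    using q1 by (intro mult_mono) auto
  have "ln_a * (2 - ln_a) * ((1 - t * c) * (1 - t * c)) \<ge> 0.64 * ((17/27) * (17/27))"
    by (rule mult_mono[OF L2 q2]) (use L in auto)
  moreover have "c * (1 - ln_a) \<le> 10/27 * 0.6" using c L by (intro mult_mono) auto
  ultimately have gap: "ln_a * (2 - ln_a) * ((1 - t * c) * (1 - t * c)) - c * (1 - ln_a) \<ge> 0"
    by simp
  have "(1 - t * c) * dpsi (t * s) - (1 - ln_a)
      \<ge> (1 - t * c) * (1 - ln_a + ln_a * (2 - ln_a) * (t * (1 - t * c))) - (1 - ln_a)"
    using dpsi_ts q1 by (simp add: mult_left_mono)
  also have "(1 - t * c) * (1 - ln_a + ln_a * (2 - ln_a) * (t * (1 - t * c))) - (1 - ln_a)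
      = t * (ln_a * (2 - ln_a) * ((1 - t * c) * (1 - t * c)) - c * (1 - ln_a))"
    by (simp add: algebra_simps)
  also have "\<dots> \<ge> 0" using gap t by simp
  finally show ?thesis by simp
qed

text \<open>G(t) = psi(e^(-t/e)) + psi(t e^(-t/e)) has derivative
  s ((1 - tc) psi'(ts) - c psi'(s)) with c = 1/e and s = e^(-tc), which is nonnegative.\<close>

lemma psi_a_sum_derivative_nonneg:
  assumes t: "0 \<le> t" "t \<le> 1"
  shows "\<exists>d. ((\<lambda>r. psi_a (exp (- r / exp 1)) + psi_a (r * exp (- r / exp 1)))
               has_real_derivative d) (at t) \<and> d \<ge> 0"
proof -
  define c where "c = 1 / exp (1::real)"
  define s where "s = exp (- t * c)"
  have c: "0 < c" "c < 10/27" using exp_1_gt by (auto simp: c_def field_simps)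
  have s_pos: "s > 0" and s_le: "s \<le> 1" and s_ge: "s \<ge> 1 - t * c"
    using t c exp_ge_add_one_self[of "- t * c"] by (auto simp: s_def)
  have ds: "((\<lambda>r. exp (- r / exp 1)) has_real_derivative s * (- c)) (at t)"
    unfolding s_def c_def by (rule derivative_eq_intros refl | simp)+
  have dts: "((\<lambda>r. r * exp (- r / exp 1)) has_real_derivative s * (1 - t * c)) (at t)"
    using DERIV_mult[OF DERIV_ident ds] by (simp add: s_def c_def algebra_simps)
  have "((\<lambda>r. psi_a (exp (- r / exp 1)) + psi_a (r * exp (- r / exp 1)))
        has_real_derivative dpsi s * (s * (- c)) + dpsi (t * s) * (s * (1 - t * c))) (at t)"
    using DERIV_add[OF DERIV_chain2[OF psi_a_has_derivative ds]
                       DERIV_chain2[OF psi_a_has_derivative dts]]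
    by (simp add: s_def c_def)
  moreover have "dpsi s * (s * (- c)) + dpsi (t * s) * (s * (1 - t * c))
      = s * ((1 - t * c) * dpsi (t * s) - c * dpsi s)"
    by (simp add: algebra_simps)
  moreover have "c * dpsi s \<le> 1 - ln_a"
    using dpsi_le_on_unit[of s] s_pos s_le c by (simp add: c_def field_simps)
  moreover have "(1 - t * c) * dpsi (t * s) \<ge> 1 - ln_a"
    using dpsi_shifted_lower_bound[OF t c s_ge] .
  ultimately show ?thesis using s_pos by fastforce
qed

lemma psi_a_sum_ge_1:
  assumes r: "0 \<le> r" "r \<le> 1"
  shows "psi_a (exp (- r / exp 1)) + psi_a (r * exp (- r / exp 1)) \<ge> 1"
proof -
  define G where "G r = psi_a (exp (- r / exp 1)) + psi_a (r * exp (- r / exp 1))" for r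
  have "G 0 \<le> G r"
  proof (rule DERIV_nonneg_imp_nondecreasing[OF r(1)])
    fix t assume "0 \<le> t" "t \<le> r"
    thus "\<exists>d. DERIV G t :> d \<and> d \<ge> 0"
      using psi_a_sum_derivative_nonneg[of t] r unfolding G_def[abs_def] by auto
  qed
  moreover have "G 0 = 1" by (simp add: G_def psi_a_0 psi_a_1)
  ultimately show ?thesis by (simp add: G_def)
qed

theorem lemma4p2:
  shows "(\<exists>!a::real. a > 0 \<and> (1 - ln a) / a = 1 / exp 1)
    \<and> convex_on {0..1} psi_a
    \<and> strict_mono_on {0..1} psi_a
    \<and> (\<forall>x\<in>{0..1}. psi_a differentiable (at x)
         \<and> deriv psi_a differentiable (at x)
         \<and> deriv (deriv psi_a) differentiable (at x))
    \<and> bij_betw psi_a {0..1} {0..1}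
    \<and> (\<forall>x\<in>{0..1}. deriv psi_a x > 0)
    \<and> strict_mono_on {0<..1} (\<lambda>x. x * deriv psi_a x / psi_a x)
    \<and> strict_mono_on {0<..1} (\<lambda>x. x * deriv (deriv psi_a) x / deriv psi_a x)
    \<and> (\<forall>r\<in>{0..1}. psi_a (exp (- r / exp 1)) + psi_a (r * exp (- r / exp 1)) \<ge> 1)"
proof -
  have elasticity: "strict_mono_on {0<..1} (\<lambda>x. x * dpsi x / psi_a x)"
  proof (rule elasticity_strict_mono_from_derivative)
    show "(psi_a has_real_derivative dpsi x) (at x)" for x by (rule psi_a_has_derivative)
    show "(dpsi has_real_derivative ddpsi x) (at x)" for x by (rule dpsi_has_derivative)
    show "dpsi x > 0" if "x \<in> {0..1}" for x using that by (intro dpsi_pos) simp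
  qed (rule psi_a_0, rule dpsi_elasticity_strict_mono)
  have smooth: "psi_a differentiable (at x)" "dpsi differentiable (at x)"
      "ddpsi differentiable (at x)" for x
    using psi_a_has_derivative dpsi_has_derivative ddpsi_has_derivative
    unfolding real_differentiable_def by blast+
  show ?thesis
    unfolding deriv_psi_a deriv_dpsi
    by (intro conjI ballI a_unique psi_a_convex psi_a_strict_mono psi_a_bij elasticity
        dpsi_elasticity_strict_mono smooth dpsi_pos psi_a_sum_ge_1) auto
qed

end
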